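(* Suppose that $\alpha>0$ is irrational and $\bm f\in\mathscr{F}$ is such that $|f_\infty|$ is bounded away from zero. Then $y_\alpha^{\bm f}$ is nowhere differentiable on $[0,1]$.
   Context: Faber--Schauder functions: $e_{0,0}(t)=\max\{0,\min\{t,1-t\}\}$, $e_{n,k}(t)=2^{-n/2}e_{0,0}(2^nt-k)$ for $n\ge1$, $k=0,\dots,2^n-1$. $\mathscr{F}$ is the class of sequences $\bm f=(f_n)_{n\ge0}$ of bounded functions $f_n:[0,1]\to\mathbb{R}$ converging uniformly to a Riemann integrable function $f_\infty$. For $t\ge0$, $t\bmod 1:=t-\lfloor t\rfloor$. For $\bm f\in\mathscr{F}$ and $\alpha>0$, $y_\alpha^{\bm f}:=\sum_{n=0}^\infty\sum_{k=0}^{2^n-1}f_n(\alpha k\bmod 1)\,e_{n,k}$. *)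

theory Defs
  imports "HOL-Analysis.Analysis"
begin

definition schauder0 :: "real \<Rightarrow> real" where
  "schauder0 t = max 0 (min t (1 - t))"

definition schauder :: "nat \<Rightarrow> nat \<Rightarrow> real \<Rightarrow> real" where
  "schauder n k t = 2 powr (- real n / 2) * schauder0 (2 ^ n * t - real k)"

definition riemann_integrable_on :: "(real \<Rightarrow> real) \<Rightarrow> real \<Rightarrow> real \<Rightarrow> bool" where
  "riemann_integrable_on g a b \<longleftrightarrow>
     (\<exists>I. \<forall>\<epsilon>>0. \<exists>\<delta>>0. \<forall>D. D tagged_division_of {a..b} \<and> (\<lambda>x. ball x \<delta>) fine D \<longrightarrow>
        \<bar>(\<Sum>(x, K)\<in>D. Henstock_Kurzweil_Integration.content K * g x) - I\<bar> < \<epsilon>)"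

definition classF :: "(nat \<Rightarrow> real \<Rightarrow> real) \<Rightarrow> (real \<Rightarrow> real) \<Rightarrow> bool" where
  "classF f finf \<longleftrightarrow> (\<forall>n. bounded (f n ` {0..1})) \<and>
     uniform_limit {0..1} f finf sequentially \<and> riemann_integrable_on finf 0 1"

definition y_alpha :: "real \<Rightarrow> (nat \<Rightarrow> real \<Rightarrow> real) \<Rightarrow> real \<Rightarrow> real" where
  "y_alpha \<alpha> f t = (\<Sum>n. \<Sum>k<2 ^ n. f n (frac (\<alpha> * real k)) * schauder n k t)"

end

theory Submission
  imports Defs
begin

text \<open>The Faber--Schauder coefficient of a
  function at \<open>e\<^sub>n\<^sub>,\<^sub>k\<close> is, up to the factor \<open>2\<^sup>-\<^sup>n\<^sup>/\<^sup>2/2\<close>, its second difference at the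
  dyadic interval \<open>[k/2\<^sup>n, (k+1)/2\<^sup>n]\<close>. At a point of differentiability these second
  differences are \<open>o(2\<^sup>-\<^sup>n)\<close> on the intervals containing the point, whereas for
  \<open>y\<^sub>\<alpha>\<^sup>f\<close> they are of order \<open>2\<^sup>-\<^sup>n\<^sup>/\<^sup>2\<close>.\<close>

lemma schauder0_eq_0_of_int: "schauder0 (of_int z) = 0"
  by (cases "z \<le> 0") (auto simp: schauder0_def max_def min_def)

lemma schauder0_of_int_plus_half: "schauder0 (of_int z + 1/2) = (if z = 0 then 1/2 else 0)"
proof -
  consider "z \<le> -1" | "z = 0" | "z \<ge> 1" by linarith
  then show ?thesis
  proof cases
    case 1
    then have "real_of_int z \<le> -1" by simp
    with 1 show ?thesis by (simp add: schauder0_def max_def min_def)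
  next
    case 3
    then have "real_of_int z \<ge> 1" by simp
    with 3 show ?thesis by (simp add: schauder0_def max_def min_def)
  qed (simp add: schauder0_def)
qed

lemma schauder0_eq_0_outside: "x \<le> 0 \<or> 1 \<le> x \<Longrightarrow> schauder0 x = 0"
  by (auto simp: schauder0_def)

lemma schauder0_midpoint_half_cell:
  fixes q :: int
  assumes "of_int q / 2 \<le> a" "a \<le> b" "b \<le> (of_int q + 1) / 2"
  shows "schauder0 ((a + b) / 2) = (schauder0 a + schauder0 b) / 2"
proof -
  consider "q \<le> -1" | "q = 0" | "q = 1" | "q \<ge> 2" by linarith
  then show ?thesis
  proof cases
    case 1
    then have "real_of_int q \<le> -1" by simp
    with assms have "b \<le> 0" by (simp add: field_simps)
    with assms show ?thesis by (simp add: schauder0_eq_0_outside)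
  next
    case 4
    then have "real_of_int q \<ge> 2" by simp
    with assms have "1 \<le> a" by (simp add: field_simps)
    with assms show ?thesis by (simp add: schauder0_eq_0_outside)
  qed (use assms in \<open>auto simp: schauder0_def max_def min_def field_simps\<close>)
qed

lemma dyadic_interval_within_parent:
  "real (k div 2 ^ d) \<le> real k / 2 ^ d \<and> (real k + 1) / 2 ^ d \<le> real (k div 2 ^ d) + 1"
proof
  show "real (k div 2 ^ d) \<le> real k / 2 ^ d"
    using of_nat_div_le_of_nat[of k "2 ^ d", where 'a=real] by simp
  have "k + 1 \<le> 2 ^ d + 2 ^ d * (k div 2 ^ d)"
    using dividend_less_times_div[of "2 ^ d" k] by simp
  then have "real (k + 1) \<le> real (2 ^ d + 2 ^ d * (k div 2 ^ d))"
    by (simp only: of_nat_le_iff)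
  then have "real k + 1 \<le> 2 ^ d * (real (k div 2 ^ d) + 1)"
    by (simp add: algebra_simps)
  then show "(real k + 1) / 2 ^ d \<le> real (k div 2 ^ d) + 1"
    by (simp add: field_simps)
qed

lemma dyadic_interval_cover:
  assumes "t \<in> {0..1}"
  obtains k :: nat where "k < 2 ^ n" "real k / 2 ^ n \<le> t" "t \<le> (real k + 1) / 2 ^ n"
proof (cases "t < 1")
  case True
  define k where "k = nat \<lfloor>2 ^ n * t\<rfloor>"
  have k: "real k = of_int \<lfloor>2 ^ n * t\<rfloor>"
    using assms by (simp add: k_def)
  have "\<lfloor>2 ^ n * t\<rfloor> < 2 ^ n"
    using True by (simp add: floor_less_iff)
  then have "k < 2 ^ n"
    using assms by (simp add: k_def nat_less_iff)
  moreover have "real k / 2 ^ n \<le> t" "t \<le> (real k + 1) / 2 ^ n"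
    unfolding k by (simp_all add: field_simps) linarith
  ultimately show ?thesis by (rule that)
next
  case False
  with assms have "t = 1" by simp
  then show ?thesis
    by (intro that[of "2 ^ n - 1"]) (simp_all add: of_nat_diff)
qed

lemma schauder_dyadic_eq_0:
  assumes "N \<le> m"
  shows "schauder m k (real j / 2 ^ N) = 0"
proof -
  have "(2::real) ^ m = 2 ^ N * 2 ^ (m - N)"
    using assms by (simp flip: power_add)
  then have "(2::real) ^ m * (real j / 2 ^ N) - real k = of_int (int (j * 2 ^ (m - N)) - int k)"
    by simp
  then show ?thesis
    unfolding schauder_def by (simp only: schauder0_eq_0_of_int mult_zero_right)
qed

definition dyadic_second_diff :: "(real \<Rightarrow> real) \<Rightarrow> nat \<Rightarrow> nat \<Rightarrow> real" where
  "dyadic_second_diff g n k =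
     g ((2 * real k + 1) / 2 ^ (n + 1)) - (g (real k / 2 ^ n) + g ((real k + 1) / 2 ^ n)) / 2"

lemma dyadic_second_diff_schauder_coarser:
  assumes "m < n"
  shows "dyadic_second_diff (schauder m j) n k = 0"
proof -
  define d where "d = n - m - 1"
  have n: "n = m + 1 + d"
    using assms by (simp add: d_def)
  define a where "a = (2::real) ^ m * (real k / 2 ^ n) - real j"
  define b where "b = (2::real) ^ m * ((real k + 1) / 2 ^ n) - real j"
  have mid: "(2::real) ^ m * ((2 * real k + 1) / 2 ^ (n + 1)) - real j = (a + b) / 2"
    by (simp add: a_def b_def field_simps)
  have a2: "2 * a = real k / 2 ^ d - 2 * real j" and b2: "2 * b = (real k + 1) / 2 ^ d - 2 * real j"
    by (simp_all add: a_def b_def n field_simps power_add)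
  \<comment> \<open>\<open>[a, b]\<close> lies in a half-cell of the hat function, on which it is affine\<close>
  define q where "q = int (k div 2 ^ d) - 2 * int j"
  have "of_int q / 2 \<le> a" "b \<le> (of_int q + 1) / 2"
    using dyadic_interval_within_parent[of k d] a2 b2 by (simp_all add: q_def)
  moreover have "a \<le> b"
    using a2 b2 divide_right_mono[of "real k" "real k + 1" "2 ^ d"] by simp
  ultimately have affine: "schauder0 ((a + b) / 2) = (schauder0 a + schauder0 b) / 2"
    by (intro schauder0_midpoint_half_cell)
  show ?thesis
    unfolding dyadic_second_diff_def schauder_def mid a_def[symmetric] b_def[symmetric] affine
    by (simp add: algebra_simps add_divide_distrib)
qed

lemma dyadic_second_diff_schauder_same_level:
  "dyadic_second_diff (schauder n j) n k = (if j = k then 2 powr (- real n / 2) / 2 else 0)"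
proof -
  have cells: "(2::real) ^ n * (real k / 2 ^ n) - real j = of_int (int k - int j)"
    "(2::real) ^ n * ((real k + 1) / 2 ^ n) - real j = of_int (int k + 1 - int j)"
    "(2::real) ^ n * ((2 * real k + 1) / 2 ^ (n + 1)) - real j = of_int (int k - int j) + 1/2"
    by (simp_all add: field_simps)
  show ?thesis
    unfolding dyadic_second_diff_def schauder_def cells schauder0_eq_0_of_int
      schauder0_of_int_plus_half
    by auto
qed

lemma dyadic_second_diff_schauder_finer:
  assumes "n < m"
  shows "dyadic_second_diff (schauder m j) n k = 0"
proof -
  have points: "real k / 2 ^ n = real (2 * k) / 2 ^ (n + 1)"
    "(real k + 1) / 2 ^ n = real (2 * k + 2) / 2 ^ (n + 1)"
    "(2 * real k + 1) / 2 ^ (n + 1) = real (2 * k + 1) / 2 ^ (n + 1)"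
    by (simp_all add: field_simps)
  from assms have level: "n + 1 \<le> m" by simp
  show ?thesis
    unfolding dyadic_second_diff_def points schauder_dyadic_eq_0[OF level] by simp
qed

lemma dyadic_second_diff_schauder:
  "dyadic_second_diff (schauder m j) n k = (if m = n \<and> j = k then 2 powr (- real n / 2) / 2 else 0)"
  using dyadic_second_diff_schauder_coarser[of m n] dyadic_second_diff_schauder_same_level[of n]
    dyadic_second_diff_schauder_finer[of n m]
  by (cases m n rule: linorder_cases) auto

definition schauder_series :: "(nat \<Rightarrow> nat \<Rightarrow> real) \<Rightarrow> real \<Rightarrow> real" where
  "schauder_series a t = (\<Sum>m. \<Sum>j<2 ^ m. a m j * schauder m j t)"

lemma y_alpha_eq_schauder_series:
  "y_alpha \<alpha> f = schauder_series (\<lambda>n k. f n (frac (\<alpha> * real k)))"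
  by (simp add: fun_eq_iff y_alpha_def schauder_series_def)

lemma schauder_series_dyadic:
  "schauder_series a (real i / 2 ^ N) = (\<Sum>m<N. \<Sum>j<2 ^ m. a m j * schauder m j (real i / 2 ^ N))"
  unfolding schauder_series_def by (rule suminf_finite) (auto simp: schauder_dyadic_eq_0)

lemma dyadic_second_diff_schauder_series:
  assumes "k < 2 ^ n"
  shows "dyadic_second_diff (schauder_series a) n k = a n k * (2 powr (- real n / 2) / 2)"
proof -
  define P where "P t = (\<Sum>m<n + 1. \<Sum>j<2 ^ m. a m j * schauder m j t)" for t
  have points: "real k / 2 ^ n = real (2 * k) / 2 ^ (n + 1)"
    "(real k + 1) / 2 ^ n = real (2 * k + 2) / 2 ^ (n + 1)"
    "(2 * real k + 1) / 2 ^ (n + 1) = real (2 * k + 1) / 2 ^ (n + 1)"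
    by (simp_all add: field_simps)
  have "dyadic_second_diff (schauder_series a) n k = dyadic_second_diff P n k"
    unfolding dyadic_second_diff_def points schauder_series_dyadic P_def ..
  also have "\<dots> = (\<Sum>m<n + 1. \<Sum>j<2 ^ m. a m j * dyadic_second_diff (schauder m j) n k)"
    by (simp add: P_def dyadic_second_diff_def ring_distribs sum_subtractf sum.distrib
        sum_divide_distrib add_divide_distrib)
  also have "\<dots> = a n k * (2 powr (- real n / 2) / 2)"
    using assms by (simp add: dyadic_second_diff_schauder if_distrib cong: if_cong)
  finally show ?thesis .
qed

lemma abs_dyadic_second_diff_schauder_series_ge:
  assumes "k < 2 ^ n"
  shows "\<bar>a n k\<bar> / 2 ^ (n + 1) \<le> \<bar>dyadic_second_diff (schauder_series a) n k\<bar>"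
proof -
  have "1 / 2 ^ n = 2 powr (- real n)"
    by (simp add: powr_minus_divide powr_realpow)
  then have "1 / 2 ^ n \<le> 2 powr (- real n / 2)"
    by simp
  then have "\<bar>a n k\<bar> * (1 / 2 ^ n / 2) \<le> \<bar>a n k\<bar> * (2 powr (- real n / 2) / 2)"
    by (intro mult_left_mono) auto
  then show ?thesis
    by (simp add: dyadic_second_diff_schauder_series[OF assms] abs_mult)
qed

lemma midpoint_defect_le:
  fixes g :: "real \<Rightarrow> real"
  assumes "g differentiable (at t within S)" and "e > 0"
  obtains \<delta> where "\<delta> > 0"
    and "\<And>l r. l \<in> S \<Longrightarrow> r \<in> S \<Longrightarrow> (l + r) / 2 \<in> S \<Longrightarrow> l \<le> t \<Longrightarrow> t \<le> r \<Longrightarrow> r - l < \<delta> \<Longrightarrow>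
           \<bar>g ((l + r) / 2) - (g l + g r) / 2\<bar> \<le> e * (r - l)"
proof -
  obtain D where "(g has_real_derivative D) (at t within S)"
    using assms(1) by (rule real_differentiableE)
  then have "(g has_derivative (*) D) (at t within S)"
    by (simp add: has_field_derivative_def)
  moreover have "e / 2 > 0" using assms(2) by simp
  ultimately obtain \<delta> where \<delta>: "\<delta> > 0"
    and approx: "\<And>x. x \<in> S \<Longrightarrow> \<bar>x - t\<bar> < \<delta> \<Longrightarrow> \<bar>g x - g t - D * (x - t)\<bar> \<le> e / 2 * \<bar>x - t\<bar>"
    unfolding has_derivative_within_alt real_norm_def by blast
  show thesis
  proof (rule that[OF \<delta>])
    fix l r
    assume lr: "l \<in> S" "r \<in> S" "(l + r) / 2 \<in> S" "l \<le> t" "t \<le> r" "r - l < \<delta>"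
    define E where "E x = g x - g t - D * (x - t)" for x
    have err: "\<bar>E x\<bar> \<le> e / 2 * (r - l)" if "x \<in> S" "l \<le> x" "x \<le> r" for x
    proof -
      have "\<bar>x - t\<bar> \<le> r - l" using that lr by linarith
      with approx[of x] that lr assms(2) show ?thesis
        unfolding E_def by (smt (verit) mult_left_mono half_gt_zero)
    qed
    have "g ((l + r) / 2) - (g l + g r) / 2 = E ((l + r) / 2) - E l / 2 - E r / 2"
      by (simp add: E_def field_simps)
    with err[of "(l + r) / 2"] err[of l] err[of r] lr show "\<bar>g ((l + r) / 2) - (g l + g r) / 2\<bar> \<le> e * (r - l)"
      by (simp add: abs_le_iff) linarith
  qed
qed

lemma dyadic_second_diff_small_at_differentiable:
  fixes g :: "real \<Rightarrow> real"
  assumes "g differentiable (at t within {0..1})" and "e > 0"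
  shows "\<forall>\<^sub>F n in sequentially. \<forall>k. k < 2 ^ n \<and> real k / 2 ^ n \<le> t \<and> t \<le> (real k + 1) / 2 ^ n
           \<longrightarrow> \<bar>dyadic_second_diff g n k\<bar> \<le> e / 2 ^ n"
proof -
  obtain \<delta> where "\<delta> > 0" and defect: "\<And>l r. l \<in> {0..1} \<Longrightarrow> r \<in> {0..1} \<Longrightarrow> (l + r) / 2 \<in> {0..1} \<Longrightarrow>
      l \<le> t \<Longrightarrow> t \<le> r \<Longrightarrow> r - l < \<delta> \<Longrightarrow> \<bar>g ((l + r) / 2) - (g l + g r) / 2\<bar> \<le> e * (r - l)"
    using midpoint_defect_le[OF assms] by blast
  have "(\<lambda>n. inverse (2 ^ n) :: real) \<longlonglongrightarrow> 0"
    by (rule LIMSEQ_inverse_realpow_zero) simp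
  with \<open>\<delta> > 0\<close> have "\<forall>\<^sub>F n in sequentially. 1 / 2 ^ n < \<delta>"
    by (auto dest: order_tendstoD(2) simp: divide_inverse)
  then show ?thesis
  proof (rule eventually_mono, intro allI impI)
    fix n k
    assume "1 / 2 ^ n < \<delta>" and k: "k < 2 ^ n \<and> real k / 2 ^ n \<le> t \<and> t \<le> (real k + 1) / 2 ^ n"
    have "real k + 1 \<le> 2 ^ n"
      using k by (metis Suc_leI of_nat_Suc of_nat_le_iff of_nat_numeral of_nat_power add.commute)
    then have "(real k + 1) / 2 ^ n \<le> 1" by simp
    with k \<open>1 / 2 ^ n < \<delta>\<close> have
      "\<bar>g ((real k / 2 ^ n + (real k + 1) / 2 ^ n) / 2) - (g (real k / 2 ^ n) + g ((real k + 1) / 2 ^ n)) / 2\<bar>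
         \<le> e * ((real k + 1) / 2 ^ n - real k / 2 ^ n)"
      by (intro defect) (auto simp: diff_divide_distrib add_divide_distrib)
    moreover have "(real k / 2 ^ n + (real k + 1) / 2 ^ n) / 2 = (2 * real k + 1) / 2 ^ (n + 1)"
      and "e * ((real k + 1) / 2 ^ n - real k / 2 ^ n) = e / 2 ^ n"
      by (simp_all add: field_simps)
    ultimately show "\<bar>dyadic_second_diff g n k\<bar> \<le> e / 2 ^ n"
      unfolding dyadic_second_diff_def by metis
  qed
qed

lemma uniform_limit_eventually_abs_gt:
  fixes f :: "nat \<Rightarrow> 'a \<Rightarrow> real"
  assumes "uniform_limit S f g F" and "\<And>x. x \<in> S \<Longrightarrow> c \<le> \<bar>g x\<bar>" and "e > 0"
  shows "\<forall>\<^sub>F n in F. \<forall>x\<in>S. c - e < \<bar>f n x\<bar>"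
  using uniform_limitD[OF assms(1,3)]
  by eventually_elim (use assms(2) in \<open>fastforce simp: dist_real_def\<close>)

theorem proposition2p7:
  fixes \<alpha> :: real and f :: "nat \<Rightarrow> real \<Rightarrow> real" and finf :: "real \<Rightarrow> real"
  assumes "\<alpha> > 0" and "\<alpha> \<notin> \<rat>"
    and "classF f finf"
    and "\<exists>c>0. \<forall>t\<in>{0..1}. \<bar>finf t\<bar> \<ge> c"
  shows "\<forall>t\<in>{0..1}. \<not> (y_alpha \<alpha> f) differentiable (at t within {0..1})"
proof (intro ballI notI)
  fix t :: real
  assume t: "t \<in> {0..1}" and "y_alpha \<alpha> f differentiable (at t within {0..1})"
  obtain c where "c > 0" and c: "\<And>x. x \<in> {0..1} \<Longrightarrow> c \<le> \<bar>finf x\<bar>"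
    using assms(4) by blast
  define a where "a = (\<lambda>n k. f n (frac (\<alpha> * real k)))"
  have "\<forall>\<^sub>F n in sequentially.
      (\<forall>x\<in>{0..1}. c - c / 2 < \<bar>f n x\<bar>) \<and>
      (\<forall>k. k < 2 ^ n \<and> real k / 2 ^ n \<le> t \<and> t \<le> (real k + 1) / 2 ^ n
         \<longrightarrow> \<bar>dyadic_second_diff (schauder_series a) n k\<bar> \<le> c / 8 / 2 ^ n)"
    using \<open>y_alpha \<alpha> f differentiable _\<close> assms(3) \<open>c > 0\<close> c unfolding classF_def
    by (intro eventually_conj uniform_limit_eventually_abs_gt dyadic_second_diff_small_at_differentiable)
      (auto simp: y_alpha_eq_schauder_series a_def)
  then obtain n where coeff: "\<forall>x\<in>{0..1}. c - c / 2 < \<bar>f n x\<bar>"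
    and small: "\<forall>k. k < 2 ^ n \<and> real k / 2 ^ n \<le> t \<and> t \<le> (real k + 1) / 2 ^ n
       \<longrightarrow> \<bar>dyadic_second_diff (schauder_series a) n k\<bar> \<le> c / 8 / 2 ^ n"
    using eventually_happens'[OF sequentially_bot] by blast
  obtain k where k: "k < 2 ^ n" "real k / 2 ^ n \<le> t" "t \<le> (real k + 1) / 2 ^ n"
    using dyadic_interval_cover[OF t] .
  have "frac (\<alpha> * real k) \<in> {0..1}"
    using frac_lt_1[of "\<alpha> * real k"] by simp
  with coeff have "c - c / 2 < \<bar>a n k\<bar>"
    unfolding a_def by blast
  then have "c / 2 / 2 ^ (n + 1) \<le> \<bar>a n k\<bar> / 2 ^ (n + 1)"
    by (intro divide_right_mono) simp_all
  also have "\<dots> \<le> \<bar>dyadic_second_diff (schauder_series a) n k\<bar>"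
    using k(1) by (rule abs_dyadic_second_diff_schauder_series_ge)
  also have "\<dots> \<le> c / 8 / 2 ^ n"
    using small k by blast
  finally show False
    using \<open>c > 0\<close> by (simp add: field_simps)
qed

end
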